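(* Let $f(x_1,x_2)=(-2+x_1+x_2)^2$ and $g(x_1,x_2)=1-x_1^2-x_2^2$; the global minimum of $f$ on $\{x: g(x)\geqslant 0\}$ is $2(3-2\sqrt{2})$. For every integer $d\geqslant 1$, the optimal value of the order-$d$ DSOS relaxation $$\sup_{\lambda,\sigma_0,\sigma_1}\lambda\quad\text{s.t.}\quad f-\lambda=\sigma_0+\sigma_1 g,\ \sigma_0\in\mathrm{DSOS}_d,\ \sigma_1\in\mathrm{DSOS}_{d-1}$$ is at most $4(1-\sqrt{2})$; in particular its gap to the global minimum is at least $2$ at every order, and the DSOS hierarchy does not converge to the global minimum.
   Context: For $\alpha\in\mathbb{N}^2$ write $x^\alpha=x_1^{\alpha_1}x_2^{\alpha_2}$ and $|\alpha|=\alpha_1+\alpha_2$. $\mathrm{DSOS}_d$ denotes the set of finite nonnegative combinations of polynomials of the forms $(x^\alpha)^2$, $(x^\alpha+x^\beta)^2$, $(x^\alpha-x^\beta)^2$ with $|\alpha|,|\beta|\leqslant d$ (diagonally-dominant sums of squares). *)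

theory Defs
  imports Complex_Main
begin

text \<open>Polynomials in two real variables are represented by the functions they
induce on real \<times> real (over an infinite field this is faithful).\<close>

definition monom2 :: "nat \<times> nat \<Rightarrow> real \<times> real \<Rightarrow> real" where
  "monom2 a x = fst x ^ fst a * snd x ^ snd a"

definition deg2 :: "nat \<times> nat \<Rightarrow> nat" where
  "deg2 a = fst a + snd a"

inductive_set DSOS :: "nat \<Rightarrow> (real \<times> real \<Rightarrow> real) set" for d :: nat where
  zero: "(\<lambda>x. 0) \<in> DSOS d"
| sq: "\<lbrakk>p \<in> DSOS d; c \<ge> 0; deg2 a \<le> d\<rbrakk>
        \<Longrightarrow> (\<lambda>x. p x + c * (monom2 a x)^2) \<in> DSOS d"
| plus: "\<lbrakk>p \<in> DSOS d; c \<ge> 0; deg2 a \<le> d; deg2 b \<le> d\<rbrakk>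
        \<Longrightarrow> (\<lambda>x. p x + c * (monom2 a x + monom2 b x)^2) \<in> DSOS d"
| minus: "\<lbrakk>p \<in> DSOS d; c \<ge> 0; deg2 a \<le> d; deg2 b \<le> d\<rbrakk>
        \<Longrightarrow> (\<lambda>x. p x + c * (monom2 a x - monom2 b x)^2) \<in> DSOS d"

definition f5 :: "real \<times> real \<Rightarrow> real" where
  "f5 x = (-2 + fst x + snd x)^2"

definition g5 :: "real \<times> real \<Rightarrow> real" where
  "g5 x = 1 - (fst x)^2 - (snd x)^2"

definition dsos_feasible :: "nat \<Rightarrow> real \<Rightarrow> bool" where
  "dsos_feasible d lam \<longleftrightarrow> (\<exists>\<sigma>0 \<sigma>1. \<sigma>0 \<in> DSOS d \<and> \<sigma>1 \<in> DSOS (d - 1) \<and>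
      (\<forall>x. f5 x - lam = \<sigma>0 x + \<sigma>1 x * g5 x))"

end

theory Submission
  imports Defs
begin

text \<open>The four points \<open>(\<plusminus>t, \<plusminus>t)\<close> with \<open>t = 1/\<surd>2\<close> lie on the circle \<open>g = 0\<close>, so the
  functional \<open>L p = (p(t,t) + p(-t,t) + p(t,-t) - p(-t,-t)) / 2\<close> kills every multiple of \<open>g\<close>.
  A monomial takes the values \<open>\<chi>(e) t\<^sup>|\<^sup>\<alpha>\<^sup>|\<close> at \<open>(e\<^sub>1 t, e\<^sub>2 t)\<close> for a character \<open>\<chi>\<close> of the sign group,
  and the weights \<open>(1,1,1,-1)/2\<close> pair any character with \<open>\<plusminus>1\<close>. Hence \<open>L\<close> maps each DSOS
  generator \<open>(x\<^sup>\<alpha> \<plusminus> x\<^sup>\<beta>)\<^sup>2\<close> to \<open>(A \<plusminus> B)\<^sup>2 \<ge> 0\<close>, at every order. But \<open>L (f - \<lambda>) = 4(1 - \<surd>2) - \<lambda>\<close>,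
  because the last weight is negative; this bounds every feasible \<open>\<lambda>\<close>.\<close>

definition diag_coord :: real where
  "diag_coord = sqrt 2 / 2"

lemma diag_coord_square: "diag_coord * diag_coord = 1/2"
  by (simp add: diag_coord_def)

definition circle_functional :: "(real \<times> real \<Rightarrow> real) \<Rightarrow> real" where
  "circle_functional p =
     (p (diag_coord, diag_coord) + p (-diag_coord, diag_coord)
      + p (diag_coord, -diag_coord) - p (-diag_coord, -diag_coord)) / 2"

lemma circle_functional_add_scaled:
  "circle_functional (\<lambda>x. p x + c * q x) = circle_functional p + c * circle_functional q"
  by (simp add: circle_functional_def algebra_simps add_divide_distrib diff_divide_distrib)

lemma monom2_scaled_signs:
  "monom2 a (u * t, v * t) = u ^ fst a * v ^ snd a * t ^ deg2 a"
  by (simp add: monom2_def deg2_def power_mult_distrib power_add)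

lemma neg_one_power_cases: "(-1::real) ^ n = 1 \<or> (-1::real) ^ n = -1"
  by (cases "even n") auto

lemma signed_square_combination_nonneg:
  fixes A B s x1 y1 x2 y2 :: real
  assumes "s = 1 \<or> s = -1" "x1 = 1 \<or> x1 = -1" "y1 = 1 \<or> y1 = -1"
    and "x2 = 1 \<or> x2 = -1" "y2 = 1 \<or> y2 = -1"
  shows "0 \<le> (A + s*B)\<^sup>2 + (x1*A + s*(y1*B))\<^sup>2 + (x2*A + s*(y2*B))\<^sup>2
              - (x1*x2*A + s*(y1*y2*B))\<^sup>2"
proof -
  have "0 \<le> A*A - 2*A*B + B*B" "0 \<le> A*A + 2*A*B + B*B"
    using zero_le_power2[of "A - B"] zero_le_power2[of "A + B"]
    by (simp_all add: power2_eq_square algebra_simps)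
  with assms show ?thesis
    by (elim disjE) (simp_all add: power2_eq_square algebra_simps)
qed

lemma circle_functional_binomial_square_nonneg:
  assumes "s = 1 \<or> s = -1"
  shows "0 \<le> circle_functional (\<lambda>x. (monom2 a x + s * monom2 b x)\<^sup>2)"
proof -
  let ?t = diag_coord
  have "monom2 c (?t, ?t) = ?t ^ deg2 c"
    and "monom2 c (-?t, ?t) = (-1) ^ fst c * ?t ^ deg2 c"
    and "monom2 c (?t, -?t) = (-1) ^ snd c * ?t ^ deg2 c"
    and "monom2 c (-?t, -?t) = (-1) ^ fst c * (-1) ^ snd c * ?t ^ deg2 c" for c
    using monom2_scaled_signs[where a = c and t = ?t and u = 1 and v = 1]
      monom2_scaled_signs[where a = c and t = ?t and u = "-1" and v = 1]
      monom2_scaled_signs[where a = c and t = ?t and u = 1 and v = "-1"]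
      monom2_scaled_signs[where a = c and t = ?t and u = "-1" and v = "-1"]
    by simp_all
  moreover have "0 \<le> (?t ^ deg2 a + s * ?t ^ deg2 b)\<^sup>2
      + ((-1) ^ fst a * ?t ^ deg2 a + s * ((-1) ^ fst b * ?t ^ deg2 b))\<^sup>2
      + ((-1) ^ snd a * ?t ^ deg2 a + s * ((-1) ^ snd b * ?t ^ deg2 b))\<^sup>2
      - ((-1) ^ fst a * (-1) ^ snd a * ?t ^ deg2 a
          + s * ((-1) ^ fst b * (-1) ^ snd b * ?t ^ deg2 b))\<^sup>2"
    by (rule signed_square_combination_nonneg) (auto simp: assms neg_one_power_cases)
  ultimately show ?thesis
    by (simp add: circle_functional_def mult.assoc)
qed

lemma circle_functional_DSOS_nonneg: "p \<in> DSOS d \<Longrightarrow> 0 \<le> circle_functional p"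
proof (induction rule: DSOS.induct)
  case zero
  then show ?case by (simp add: circle_functional_def)
next
  case (sq p c a)
  have "0 \<le> circle_functional (\<lambda>x. (monom2 a x + 1 * monom2 a x)\<^sup>2)"
    by (rule circle_functional_binomial_square_nonneg) simp
  then have "0 \<le> circle_functional (\<lambda>x. (monom2 a x)\<^sup>2)"
    by (simp add: circle_functional_def power2_eq_square algebra_simps)
  with sq show ?case by (simp add: circle_functional_add_scaled)
next
  case (plus p c a b)
  have "0 \<le> circle_functional (\<lambda>x. (monom2 a x + 1 * monom2 b x)\<^sup>2)"
    by (rule circle_functional_binomial_square_nonneg) simp
  with plus show ?case by (simp add: circle_functional_add_scaled)
next
  case (minus p c a b)
  have "0 \<le> circle_functional (\<lambda>x. (monom2 a x + (-1) * monom2 b x)\<^sup>2)"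
    by (rule circle_functional_binomial_square_nonneg) simp
  with minus show ?case by (simp add: circle_functional_add_scaled)
qed

lemma g5_diagonal_points:
  "g5 (diag_coord, diag_coord) = 0" "g5 (-diag_coord, diag_coord) = 0"
  "g5 (diag_coord, -diag_coord) = 0" "g5 (-diag_coord, -diag_coord) = 0"
  by (simp_all add: g5_def power2_eq_square diag_coord_square)

lemma circle_functional_vanishes_on_multiples_of_g5:
  "circle_functional (\<lambda>x. q x * g5 x) = 0"
  by (simp add: circle_functional_def g5_diagonal_points)

lemma circle_functional_f5_minus_const:
  "circle_functional (\<lambda>x. f5 x - lam) = 4 * (1 - sqrt 2) - lam"
  by (simp add: circle_functional_def f5_def diag_coord_def power2_eq_square
      algebra_simps field_simps)

lemma dsos_feasible_upper_bound:
  assumes "dsos_feasible d lam"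
  shows "lam \<le> 4 * (1 - sqrt 2)"
proof -
  obtain \<sigma>0 \<sigma>1 where \<sigma>0: "\<sigma>0 \<in> DSOS d" and cert: "\<forall>x. f5 x - lam = \<sigma>0 x + \<sigma>1 x * g5 x"
    using assms unfolding dsos_feasible_def by blast
  have "4 * (1 - sqrt 2) - lam = circle_functional (\<lambda>x. f5 x - lam)"
    by (rule circle_functional_f5_minus_const[symmetric])
  also have "\<dots> = circle_functional (\<lambda>x. \<sigma>0 x + 1 * (\<sigma>1 x * g5 x))"
    using cert by (intro arg_cong[where f = circle_functional]) auto
  also have "\<dots> = circle_functional \<sigma>0"
    by (simp only: circle_functional_add_scaled circle_functional_vanishes_on_multiples_of_g5)
  finally have "4 * (1 - sqrt 2) - lam = circle_functional \<sigma>0" .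
  with circle_functional_DSOS_nonneg[OF \<sigma>0] show ?thesis
    by linarith
qed

lemma f5_lower_bound_on_disc:
  assumes "0 \<le> g5 (a, b)"
  shows "2 * (3 - 2 * sqrt 2) \<le> f5 (a, b)"
proof -
  have "(a + b)\<^sup>2 \<le> 2"
    using assms zero_le_power2[of "a - b"] by (simp add: g5_def power2_eq_square algebra_simps)
  then have "a + b \<le> sqrt 2"
    by (rule real_le_rsqrt)
  moreover have "sqrt 2 \<le> 2"
    using real_sqrt_le_mono[of 2 4] by simp
  ultimately have "(2 - sqrt 2)\<^sup>2 \<le> (2 - a - b)\<^sup>2"
    by (intro power_mono) auto
  moreover have "(2 - sqrt 2)\<^sup>2 = 2 * (3 - 2 * sqrt 2)"
    by (simp add: power2_diff)
  moreover have "(2 - a - b)\<^sup>2 = f5 (a, b)"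
    by (simp add: f5_def power2_eq_square algebra_simps)
  ultimately show ?thesis
    by simp
qed

lemma f5_diagonal_point: "f5 (diag_coord, diag_coord) = 2 * (3 - 2 * sqrt 2)"
proof -
  have "f5 (diag_coord, diag_coord) = 6 - 8 * diag_coord"
    by (simp add: f5_def power2_eq_square algebra_simps diag_coord_square)
  then show ?thesis
    by (simp add: diag_coord_def)
qed

theorem mainTheorem5:
  shows "(\<forall>x. g5 x \<ge> 0 \<longrightarrow> f5 x \<ge> 2 * (3 - 2 * sqrt 2))
       \<and> (\<exists>x. g5 x \<ge> 0 \<and> f5 x = 2 * (3 - 2 * sqrt 2))
       \<and> (\<forall>d::nat. d \<ge> 1 \<longrightarrow> (\<forall>lam. dsos_feasible d lam \<longrightarrow> lam \<le> 4 * (1 - sqrt 2)))"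
proof (intro conjI allI impI)
  fix x :: "real \<times> real"
  assume "0 \<le> g5 x"
  moreover obtain a b where "x = (a, b)"
    by fastforce
  ultimately show "2 * (3 - 2 * sqrt 2) \<le> f5 x"
    using f5_lower_bound_on_disc[of a b] by simp
next
  show "\<exists>x. 0 \<le> g5 x \<and> f5 x = 2 * (3 - 2 * sqrt 2)"
    using g5_diagonal_points(1) f5_diagonal_point
    by (intro exI[of _ "(diag_coord, diag_coord)"]) simp
qed (rule dsos_feasible_upper_bound)

end
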